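(* Let $q=p^f$ with $p$ prime, $n\ge2$ and $(n,q)\notin\{(2,2),(2,3)\}$. Let $\beta$ be a basis of $V=\mathbb{F}_q^n$ and $\phi=\phi_\beta$. Let $H\le\Gamma\mathrm{L}_n(q)$ with $H\cap\mathrm{GL}_n(q)\le Z(\mathrm{GL}_n(q))$. Then there exists $b\in\mathrm{GL}_n(q)$ such that every element of $H^b$ has the form $\phi^i g$ for some $i\in\{1,\dots,f\}$ and some $g\in Z(\mathrm{GL}_n(q))$.
   Context: $\Gamma\mathrm{L}_n(q)$ is the group of invertible $\mathbb{F}_q$-semilinear transformations of $V$. For $\beta=\{v_1,\dots,v_n\}$, $\phi_\beta$ is the semilinear map $\sum_i\lambda_iv_i\mapsto\sum_i\lambda_i^p v_i$, so $\Gamma\mathrm{L}_n(q)=\mathrm{GL}_n(q)\rtimes\langle\phi_\beta\rangle$. $Z(\mathrm{GL}_n(q))$ is the group of scalar matrices; $H^b=b^{-1}Hb$. *)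

theory Defs
  imports "HOL-Computational_Algebra.Primes" "HOL-Library.Function_Algebras"
begin

text \<open>The vector space V = F_q^n is modelled as the functions 'n \<Rightarrow> 'a,
  where 'n is a finite index type with CARD('n) = n and 'a is a finite field.\<close>

definition smultv :: "'a::field \<Rightarrow> ('n \<Rightarrow> 'a) \<Rightarrow> ('n \<Rightarrow> 'a)" where
  "smultv c v = (\<lambda>i. c * v i)"

definition field_aut :: "('a::field \<Rightarrow> 'a) \<Rightarrow> bool" where
  "field_aut \<sigma> \<longleftrightarrow> bij \<sigma> \<and> (\<forall>x y. \<sigma> (x + y) = \<sigma> x + \<sigma> y) \<and> (\<forall>x y. \<sigma> (x * y) = \<sigma> x * \<sigma> y)"

definition GammaL :: "(('n::finite \<Rightarrow> 'a::field) \<Rightarrow> ('n \<Rightarrow> 'a)) set" where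
  "GammaL = {g. bij g \<and> (\<forall>u v. g (u + v) = g u + g v) \<and>
      (\<exists>\<sigma>. field_aut \<sigma> \<and> (\<forall>c v. g (smultv c v) = smultv (\<sigma> c) (g v)))}"

definition GL :: "(('n::finite \<Rightarrow> 'a::field) \<Rightarrow> ('n \<Rightarrow> 'a)) set" where
  "GL = {g. bij g \<and> (\<forall>u v. g (u + v) = g u + g v) \<and> (\<forall>c v. g (smultv c v) = smultv c (g v))}"

definition scalars :: "(('n::finite \<Rightarrow> 'a::field) \<Rightarrow> ('n \<Rightarrow> 'a)) set" where
  "scalars = {(\<lambda>v. smultv c v) | c. c \<noteq> 0}"

definition subgroup_GammaL :: "(('n::finite \<Rightarrow> 'a::field) \<Rightarrow> ('n \<Rightarrow> 'a)) set \<Rightarrow> bool" where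
  "subgroup_GammaL H \<longleftrightarrow> H \<subseteq> GammaL \<and> id \<in> H \<and>
     (\<forall>g\<in>H. \<forall>h\<in>H. g \<circ> h \<in> H) \<and> (\<forall>g\<in>H. inv g \<in> H)"

definition lincomb :: "('n::finite \<Rightarrow> 'n \<Rightarrow> 'a::field) \<Rightarrow> ('n \<Rightarrow> 'a) \<Rightarrow> ('n \<Rightarrow> 'a)" where
  "lincomb \<beta> l = (\<Sum>i\<in>UNIV. smultv (l i) (\<beta> i))"

definition is_basis :: "('n::finite \<Rightarrow> 'n \<Rightarrow> 'a::field) \<Rightarrow> bool" where
  "is_basis \<beta> \<longleftrightarrow> bij (lincomb \<beta>)"

definition phi_basis :: "nat \<Rightarrow> ('n::finite \<Rightarrow> 'n \<Rightarrow> 'a::field) \<Rightarrow> ('n \<Rightarrow> 'a) \<Rightarrow> ('n \<Rightarrow> 'a)" where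
  "phi_basis p \<beta> v = lincomb \<beta> (\<lambda>i. (inv (lincomb \<beta>) v i) ^ p)"

end

theory Submission
  imports "HOL-Algebra.Algebraic_Closure_Type" "HOL-Number_Theory.Residues" Defs
begin

text \<open>Every automorphism of \<open>GF(q)\<close>, \<open>q = p ^ f\<close>, is a power of the Frobenius \<open>x \<mapsto> x ^ p\<close>,
  so each element of \<open>\<Gamma>L\<^sub>n(q)\<close> is \<open>p ^ e\<close>-semilinear for an exponent \<open>e\<close> unique modulo \<open>f\<close>.
  As \<open>H \<inter> GL\<^sub>n(q)\<close> consists of scalars, the exponents met in \<open>H\<close> are the multiples of some
  \<open>k\<close> dividing \<open>f\<close>, and \<open>H\<close> is generated modulo scalars by one element \<open>h\<close> of exponent \<open>k\<close>,
  whose power \<open>h ^ m\<close>, \<open>k m = f\<close>, is a scalar \<open>\<lambda>\<close>. Since the norm \<open>GF(q) \<rightarrow> GF(p ^ k)\<close> is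
  onto, rescaling \<open>h\<close> by an element of norm \<open>\<lambda>\<inverse>\<close> gives a semilinear \<open>h'\<close> with \<open>h' ^ m = 1\<close>.
  By Galois descent (Dedekind's independence of characters) \<open>V\<close> has a basis of \<open>h'\<close>-fixed
  vectors, and the linear map taking \<open>\<beta>\<close> to it conjugates \<open>h'\<close> to \<open>\<phi> ^ k\<close>; it conjugates all
  of \<open>H\<close> into \<open>\<langle>\<phi>\<rangle> Z(GL\<^sub>n(q))\<close>.\<close>

text \<open>\<open>Algebraic_Closure_Type\<close> is imported before \<open>Defs\<close> so that \<open>prime\<close> denotes the
  number-theoretic predicate rather than \<open>Divisibility.prime\<close>; the bundle below returns
  \<open>inv\<close> to Hilbert choice.\<close>
unbundle no m_inv_syntax

section \<open>Finite fields and their automorphisms\<close>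

lemma (in comm_monoid_set) lessThan_Suc_shift_periodic:
  assumes "g n = g 0"
  shows "F (\<lambda>k. g (Suc k)) {..<n} = F g {..<n}"
proof (cases n)
  case (Suc m)
  have "F (\<lambda>k. g (Suc k)) {..<n} = g n \<^bold>* F (\<lambda>k. g (Suc k)) {..<m}"
    by (simp add: Suc commute)
  also have "\<dots> = F g {..<n}"
    unfolding Suc lessThan_Suc_shift using assms Suc by simp
  finally show ?thesis .
qed simp

lemma poly_map_poly_hom:
  fixes g :: "'a::comm_semiring_1 \<Rightarrow> 'b::comm_semiring_1"
  assumes "g 0 = 0" "\<And>x y. g (x + y) = g x + g y" "\<And>x y. g (x * y) = g x * g y"
  shows "poly (map_poly g P) (g x) = g (poly P x)"
  by (induction P rule: pCons_induct) (auto simp: assms map_poly_pCons)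

lemma power_diff_1_eq_nat: "(r::nat) ^ m - 1 = (r - 1) * (\<Sum>i<m. r ^ i)"
proof (cases "r = 0")
  case False
  then have "int (r ^ m - 1) = int ((r - 1) * (\<Sum>i<m. r ^ i))"
    using power_diff_1_eq[of "int r" m] by (simp add: of_nat_diff Suc_leI)
  then show ?thesis
    by (simp only: of_nat_eq_iff)
qed (cases m, simp_all)

lemma finite_field_primitive_element:
  assumes "finite (UNIV :: 'a set)"
  obtains w :: "'a::field" where "w \<noteq> 0" and "\<And>x. x \<noteq> 0 \<Longrightarrow> \<exists>i. x = w ^ i"
    and "\<And>d. w ^ d = 1 \<longleftrightarrow> (card (UNIV :: 'a set) - 1) dvd d"
proof -
  define R where "R = (ring_of_type_algebra :: 'a ring)"
  interpret R: field R unfolding R_def by (rule field_from_type_algebra)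
  \<comment> \<open>Qualified: \<open>Ring_Divisibility\<close> declares a second constant \<open>mult_of\<close>.\<close>
  define G where "G = Multiplicative_Group.mult_of R"
  interpret G: group G unfolding G_def by (rule R.field_mult_group)
  have carrier: "carrier G = UNIV - {0}"
    by (simp add: G_def R_def ring_of_type_algebra_def)
  have powR: "x [^]\<^bsub>R\<^esub> (n::nat) = x ^ n" for x n
    by (induction n) (simp_all add: R_def ring_of_type_algebra_def)
  have powG: "x [^]\<^bsub>G\<^esub> (n::nat) = x ^ n" for x n
    using powR by (simp add: G_def Multiplicative_Group.nat_pow_mult_of)
  have fin: "finite (carrier G)" using assms by (simp add: carrier)
  have "finite (carrier R)" using assms by (simp add: R_def ring_of_type_algebra_def)
  then obtain w where w: "w \<in> carrier G" and gen: "carrier G = {w ^ i | i::nat. i \<in> UNIV}"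
    using R.finite_field_mult_group_has_gen unfolding G_def powR by blast
  have "G.ord w = card {w ^ i | i::nat. i \<in> UNIV}"
    using G.generate_pow_card[OF w] unfolding G.generate_pow_on_finite_carrier[OF fin w] powG .
  also have "\<dots> = card (UNIV :: 'a set) - 1"
    unfolding gen[symmetric] carrier using assms by (simp add: card_Diff_singleton)
  finally have ord: "G.ord w = card (UNIV :: 'a set) - 1" .
  show ?thesis
  proof
    show "w \<noteq> 0"
      using w carrier by blast
    show "\<exists>i. x = w ^ i" if "x \<noteq> 0" for x
      using that gen unfolding carrier by blast
    show "w ^ d = 1 \<longleftrightarrow> (card (UNIV :: 'a set) - 1) dvd d" for d
      using G.pow_eq_id[OF w, of d] unfolding ord powG by (simp add: G_def R_def ring_of_type_algebra_def)
  qed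
qed

lemma field_aut_hom:
  assumes "field_aut \<sigma>"
  shows "\<sigma> 0 = 0" and "\<sigma> 1 = 1" and "\<sigma> (x + y) = \<sigma> x + \<sigma> y" and "\<sigma> (x * y) = \<sigma> x * \<sigma> y"
    and "\<sigma> (of_nat k) = of_nat k" and "\<sigma> (x ^ i) = \<sigma> x ^ i"
proof -
  have add: "\<And>x y. \<sigma> (x + y) = \<sigma> x + \<sigma> y" and mult: "\<And>x y. \<sigma> (x * y) = \<sigma> x * \<sigma> y"
    using assms by (auto simp: field_aut_def)
  show "\<sigma> (x + y) = \<sigma> x + \<sigma> y" "\<sigma> (x * y) = \<sigma> x * \<sigma> y" by (fact add mult)+
  have "\<sigma> 0 + \<sigma> 0 = \<sigma> 0 + 0"
    using add[of 0 0] by simp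
  then show zero: "\<sigma> 0 = 0"
    by (rule add_left_imp_eq)
  obtain y where "\<sigma> y = 1"
    using assms by (metis bij_pointE field_aut_def)
  then show one: "\<sigma> 1 = 1"
    using mult[of 1 y] by simp
  show "\<sigma> (of_nat k) = of_nat k"
    by (induction k) (simp_all add: zero one add)
  show "\<sigma> (x ^ i) = \<sigma> x ^ i"
    by (induction i) (simp_all add: one mult)
qed

locale galois_field =
  fixes p f :: nat and field_type :: "'a::field itself"
  assumes finite_field: "finite (UNIV :: 'a set)"
    and prime_p: "prime p" and f_pos: "f \<ge> 1"
    and card_field: "card (UNIV :: 'a set) = p ^ f"
begin

lemma p_gt_1: "p > 1"
  using prime_p prime_gt_1_nat by blast

lemma CHAR_eq_p: "CHAR('a) = p"
proof -
  have "prime CHAR('a)"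
    using prime_CHAR_semidom finite_imp_CHAR_pos[OF finite_field] by blast
  moreover have "CHAR('a) dvd p ^ f"
    using CHAR_dvd_CARD[where 'a='a] card_field by simp
  ultimately show ?thesis
    using prime_p prime_dvd_power_nat primes_dvd_imp_eq by blast
qed

lemma frob_add: "((x::'a) + y) ^ p ^ e = x ^ p ^ e + y ^ p ^ e"
  by (rule freshmans_dream') (auto simp: CHAR_eq_p prime_p)

lemma frob_diff: "((x::'a) - y) ^ p ^ e = x ^ p ^ e - y ^ p ^ e"
  using frob_add[of "x - y" y e] by (simp add: algebra_simps)

lemma frob_power_f: "(x::'a) ^ p ^ f = x"
proof -
  obtain w :: 'a where "w \<noteq> 0" and gen: "\<And>x. x \<noteq> 0 \<Longrightarrow> \<exists>i. x = w ^ i"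
    and ord: "\<And>d. w ^ d = 1 \<longleftrightarrow> (p ^ f - 1) dvd d"
    using finite_field_primitive_element[OF finite_field] unfolding card_field by blast
  have "x ^ (p ^ f - 1) = 1" if "x \<noteq> 0"
  proof -
    from gen[OF that] obtain i where "x = w ^ i" ..
    then show ?thesis
      using ord[of "(p ^ f - 1) * i"] by (simp add: power_mult[symmetric] mult.commute)
  qed
  moreover have "x ^ p ^ f = x * x ^ (p ^ f - 1)"
    using p_gt_1 by (simp flip: power_Suc)
  ultimately show ?thesis
    by (cases "x = 0") simp_all
qed

lemma frob_power_mult_f: "(x::'a) ^ p ^ (f * t) = x"
  by (induction t) (simp_all add: power_add power_mult frob_power_f)

lemma frob_power_mod: "(x::'a) ^ p ^ e = x ^ p ^ (e mod f)"
proof -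
  have "x ^ p ^ e = (x ^ p ^ (f * (e div f))) ^ p ^ (e mod f)"
    by (metis mult_div_mod_eq power_add power_mult)
  then show ?thesis
    by (simp only: frob_power_mult_f)
qed

lemma frob_power_cong: "a mod f = b mod f \<Longrightarrow> (x::'a) ^ p ^ a = x ^ p ^ b"
  by (metis frob_power_mod)

lemma frob_surj: "\<exists>y::'a. y ^ p ^ e = x"
proof
  have "f * e - e + e = f * e"
    using f_pos by simp
  then show "(x ^ p ^ (f * e - e)) ^ p ^ e = x"
    by (metis power_add power_mult frob_power_mult_f)
qed

lemma frob_exponent_inj:
  assumes "a < f" and "b < f" and "\<And>x::'a. x ^ p ^ a = x ^ p ^ b"
  shows "a = b"
proof -
  obtain w :: 'a where "w \<noteq> 0" and ord: "\<And>d. w ^ d = 1 \<longleftrightarrow> (p ^ f - 1) dvd d"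
    using finite_field_primitive_element[OF finite_field] unfolding card_field by blast
  have "w ^ p ^ a \<noteq> w ^ p ^ b" if "a < b" "b < f" for a b
  proof
    assume eq: "w ^ p ^ a = w ^ p ^ b"
    have lt: "0 < p ^ a" "p ^ a < p ^ b" "p ^ b < p ^ f"
      using that p_gt_1 by simp_all
    then have "w ^ p ^ b = w ^ p ^ a * w ^ (p ^ b - p ^ a)"
      by (simp flip: power_add)
    then have "w ^ (p ^ b - p ^ a) = 1"
      using eq \<open>w \<noteq> 0\<close> by simp
    then have "(p ^ f - 1) dvd (p ^ b - p ^ a)"
      using ord by blast
    moreover have "0 < p ^ b - p ^ a" and "p ^ b - p ^ a < p ^ f - 1"
      using lt by (simp, arith)
    ultimately show False
      using nat_dvd_not_less by blast
  qed
  then show ?thesis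
    using assms by (metis linorder_neqE_nat)
qed

lemma of_nat_frob: "(of_nat k :: 'a) ^ p = of_nat k"
proof (induction k)
  case 0
  then show ?case using p_gt_1 by simp
next
  case (Suc k)
  then show ?case
    using frob_add[of "of_nat k" 1 1] by (simp add: ac_simps)
qed

lemma frob_fixed_in_prime_field:
  assumes "(c::'a) ^ p = c"
  shows "c \<in> range of_nat"
proof -
  define P :: "'a poly" where "P = monom 1 p - monom 1 1"
  have "coeff P p = 1"
    using p_gt_1 by (simp add: P_def coeff_monom)
  then have "P \<noteq> 0"
    by auto
  then have "card {x. poly P x = 0} \<le> degree P"
    by (rule card_poly_roots_bound)
  also have "degree P \<le> p"
    unfolding P_def using p_gt_1
    by (intro degree_diff_le) (auto intro: order.trans[OF degree_monom_le])
  also have "p = card (of_nat ` {..<p} :: 'a set)"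
    by (subst card_image) (auto intro!: inj_onI simp: of_nat_eq_iff_cong_CHAR CHAR_eq_p cong_def)
  finally have "card {x. poly P x = 0} \<le> card (of_nat ` {..<p} :: 'a set)" .
  moreover have "of_nat ` {..<p} \<subseteq> {x. poly P x = 0}"
    by (auto simp: P_def poly_monom of_nat_frob)
  ultimately have "of_nat ` {..<p} = {x. poly P x = 0}"
    using card_seteq finite_field by (metis finite_subset subset_UNIV)
  moreover have "poly P c = 0"
    using assms by (simp add: P_def poly_monom)
  ultimately show ?thesis
    by blast
qed

lemma field_aut_fixes_frob_fixed:
  assumes "field_aut \<sigma>" and "(c::'a) ^ p = c"
  shows "\<sigma> c = c"
  using frob_fixed_in_prime_field[OF assms(2)] field_aut_hom(5)[OF assms(1)] by auto

lemma frob_invariant_orbit_poly: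
  fixes w :: 'a
  defines "P \<equiv> \<Prod>k<f. [:- (w ^ p ^ k), 1:]"
  shows "map_poly (\<lambda>x. x ^ p) P = P"
proof (rule poly_eqI_degree[where A = UNIV])
  have poly_P: "poly P x = (\<Prod>k<f. x - w ^ p ^ k)" for x
    by (simp add: P_def poly_prod)
  fix y :: 'a
  obtain x where y: "y = x ^ p ^ 1"
    using frob_surj[of 1 y] by (metis eq_commute)
  have "poly (map_poly (\<lambda>x. x ^ p) P) (x ^ p) = poly P x ^ p"
    using p_gt_1 frob_add[where e = 1] by (intro poly_map_poly_hom) (simp_all add: power_mult_distrib)
  also have "\<dots> = (\<Prod>k<f. x ^ p - w ^ p ^ Suc k)"
    using frob_diff[where e = 1]
    by (simp add: poly_P prod_power_distrib power_mult[symmetric] mult.commute)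
  also have "\<dots> = (\<Prod>k<f. x ^ p - w ^ p ^ k)"
    by (rule prod.lessThan_Suc_shift_periodic) (simp add: frob_power_f)
  finally show "poly (map_poly (\<lambda>x. x ^ p) P) y = poly P y"
    using y poly_P by simp
next
  have "degree P \<le> f"
    unfolding P_def using degree_prod_sum_le[of "{..<f}" "\<lambda>k. [:- (w ^ p ^ k), 1:]"]
    by (simp add: o_def)
  moreover have "f < p ^ f"
    using less_exp[of f] power_mono[of 2 p f] p_gt_1 by linarith
  ultimately show "degree P < card (UNIV :: 'a set)" "degree (map_poly (\<lambda>x. x ^ p) P) < card (UNIV :: 'a set)"
    using map_poly_degree_leq[of "\<lambda>x. x ^ p" P] card_field by simp_all
qed

lemma field_aut_eq_frob_power:
  assumes "field_aut \<sigma>"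
  obtains k where "k < f" and "\<And>x::'a. \<sigma> x = x ^ p ^ k"
proof -
  obtain w :: 'a where "w \<noteq> 0" and gen: "\<And>x. x \<noteq> 0 \<Longrightarrow> \<exists>i. x = w ^ i"
    using finite_field_primitive_element[OF finite_field] by blast
  define P where "P = (\<Prod>k<f. [:- (w ^ p ^ k), 1:])"
  \<comment> \<open>The coefficients of \<open>P\<close> are fixed by Frobenius, so they lie in the prime field.\<close>
  have "coeff P i ^ p = coeff P i" for i
    using arg_cong[OF frob_invariant_orbit_poly[of w], of "\<lambda>Q. coeff Q i"] p_gt_1
    by (simp add: P_def coeff_map_poly)
  then have "\<sigma> (coeff P i) = coeff P i" for i
    by (rule field_aut_fixes_frob_fixed[OF assms])
  then have "map_poly \<sigma> P = P"
    by (intro poly_eqI) (simp add: coeff_map_poly field_aut_hom(1)[OF assms])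
  then have "poly P (\<sigma> w) = \<sigma> (poly P w)"
    using poly_map_poly_hom[of \<sigma> P w] field_aut_hom[OF assms] by simp
  also have "poly P w = 0"
    using f_pos by (auto simp: P_def poly_prod intro!: bexI[of _ 0])
  finally have "(\<Prod>k<f. \<sigma> w - w ^ p ^ k) = 0"
    using field_aut_hom(1)[OF assms] by (simp add: P_def poly_prod)
  then obtain k where "k < f" and k: "\<sigma> w = w ^ p ^ k"
    by auto
  have "\<sigma> x = x ^ p ^ k" for x
  proof (cases "x = 0")
    case True
    then show ?thesis using field_aut_hom(1)[OF assms] p_gt_1 by simp
  next
    case False
    then obtain i where "x = w ^ i" using gen by blast
    then show ?thesis
      using field_aut_hom(6)[OF assms] k by (simp flip: power_mult add: mult.commute)
  qed
  with \<open>k < f\<close> show ?thesis using that by blast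
qed

text \<open>\<open>\<nu> \<mapsto> \<nu> ^ (\<Sum>j<m. (p ^ k) ^ j)\<close> is the norm from \<open>GF(p ^ f)\<close> to \<open>GF(p ^ k)\<close>.\<close>
lemma frob_norm_surj:
  assumes "k * m = f" and "c \<noteq> 0" and "c ^ p ^ k = (c::'a)"
  obtains \<nu> where "\<nu> \<noteq> 0" and "\<nu> ^ (\<Sum>j<m. (p ^ k) ^ j) = c"
proof -
  obtain w :: 'a where "w \<noteq> 0" and gen: "\<And>x. x \<noteq> 0 \<Longrightarrow> \<exists>i. x = w ^ i"
    and ord: "\<And>d. w ^ d = 1 \<longleftrightarrow> (p ^ f - 1) dvd d"
    using finite_field_primitive_element[OF finite_field] unfolding card_field by blast
  obtain a where a: "c = w ^ a"
    using gen assms(2) by blast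
  define r where "r = p ^ k"
  define s where "s = (\<Sum>j<m. r ^ j)"
  have "k \<noteq> 0"
    using assms(1) f_pos by auto
  then have "r > 1"
    unfolding r_def using p_gt_1 by (intro one_less_power) auto
  then have "Suc (r - 1) = r"
    by simp
  then have "c * c ^ (r - 1) = c * 1"
    using assms(3) by (metis power_Suc r_def mult_1_right)
  then have "c ^ (r - 1) = 1"
    using assms(2) by simp
  then have "w ^ (a * (r - 1)) = 1"
    by (simp add: a power_mult)
  then have "(p ^ f - 1) dvd (r - 1) * a"
    using ord by (simp add: mult.commute)
  moreover have "p ^ f - 1 = (r - 1) * s"
    unfolding s_def r_def assms(1)[symmetric] power_mult by (rule power_diff_1_eq_nat)
  ultimately have "s dvd a"
    using \<open>r > 1\<close> by simp
  then obtain a' where "a = s * a'" ..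
  then have "(w ^ a') ^ s = c"
    by (simp add: a power_mult[symmetric] mult.commute)
  moreover have "w ^ a' \<noteq> 0"
    using \<open>w \<noteq> 0\<close> by simp
  ultimately show ?thesis
    using that unfolding s_def r_def by blast
qed

end

section \<open>Independence of characters and bases\<close>

context vector_space
begin

lemma twisted_character_sum_in_span:
  fixes \<chi> :: "nat \<Rightarrow> 'a \<Rightarrow> 'a" and x :: "nat \<Rightarrow> 'b"
  assumes mult: "\<And>k a b. \<chi> k (a * b) = \<chi> k a * \<chi> k b"
    and in_span: "\<And>a. (\<Sum>k<m. \<chi> k a *s x k) \<in> span S"
  shows "(\<Sum>k<m. \<chi> k a *s ((\<chi> k b - c) *s x k)) \<in> span S"
proof -
  have "(\<Sum>k<m. \<chi> k a *s ((\<chi> k b - c) *s x k))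
      = (\<Sum>k<m. \<chi> k (a * b) *s x k) - c *s (\<Sum>k<m. \<chi> k a *s x k)"
    by (simp add: mult scale_sum_right algebra_simps flip: sum_subtractf)
  then show ?thesis
    by (simp add: span_diff span_scale in_span)
qed

lemma characters_independent_modulo_span:
  fixes \<chi> :: "nat \<Rightarrow> 'a \<Rightarrow> 'a" and x :: "nat \<Rightarrow> 'b"
  assumes mult: "\<And>k a b. \<chi> k (a * b) = \<chi> k a * \<chi> k b" and one: "\<And>k. \<chi> k 1 = 1"
    and distinct: "\<And>k l. k < m \<Longrightarrow> l < m \<Longrightarrow> k \<noteq> l \<Longrightarrow> \<exists>b. \<chi> k b \<noteq> \<chi> l b"
    and in_span: "\<And>a. (\<Sum>k<m. \<chi> k a *s x k) \<in> span S"
  shows "k < m \<Longrightarrow> x k \<in> span S"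
  using in_span
proof (induction "card {k. k < m \<and> x k \<notin> span S}" arbitrary: x k rule: less_induct)
  case less
  show ?case
  proof (rule ccontr)
    assume "x k \<notin> span S"
    let ?bad = "\<lambda>x. {k. k < m \<and> x k \<notin> span S}"
    have others: "x l \<in> span S" if "l < m" "l \<noteq> k" for l
    proof -
      obtain b where b: "\<chi> l b \<noteq> \<chi> k b"
        using distinct \<open>l < m\<close> \<open>k < m\<close> \<open>l \<noteq> k\<close> by blast
      define y where "y j = (\<chi> j b - \<chi> k b) *s x j" for j
      have "?bad y \<subseteq> ?bad x - {k}"
        by (auto simp: y_def span_zero span_scale)
      then have "card (?bad y) < card (?bad x)"
        using \<open>k < m\<close> \<open>x k \<notin> span S\<close> by (intro psubset_card_mono) auto
      moreover have "(\<Sum>j<m. \<chi> j a *s y j) \<in> span S" for a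
        unfolding y_def by (rule twisted_character_sum_in_span[OF mult less.prems(2)])
      ultimately have "y l \<in> span S"
        using less.hyps \<open>l < m\<close> by blast
      then have "inverse (\<chi> l b - \<chi> k b) *s y l \<in> span S"
        by (rule span_scale)
      then show ?thesis
        using b by (simp add: y_def)
    qed
    have "(\<Sum>j<m. x j) \<in> span S"
      using less.prems(2)[of 1] by (simp add: one)
    moreover have "(\<Sum>j<m. x j) = x k + (\<Sum>j\<in>{..<m} - {k}. x j)"
      using \<open>k < m\<close> by (simp add: sum.remove)
    moreover have "(\<Sum>j\<in>{..<m} - {k}. x j) \<in> span S"
      using others by (intro span_sum) auto
    ultimately have "x k \<in> span S"
      using span_add_eq2 by simp
    with \<open>x k \<notin> span S\<close> show False ..
  qed
qed

end

lemma smultv_apply [simp]: "smultv c v i = c * v i"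
  by (simp add: smultv_def)

lemma sum_fun_apply: "(\<Sum>i\<in>A. F i) j = (\<Sum>i\<in>A. F i j)"
  by (induction A rule: infinite_finite_induct) auto

interpretation V: vector_space "smultv :: 'a::field \<Rightarrow> ('n \<Rightarrow> 'a) \<Rightarrow> ('n \<Rightarrow> 'a)"
  by unfold_locales (auto simp: fun_eq_iff algebra_simps)

lemma finite_vectors:
  assumes "finite (UNIV :: 'a set)"
  shows "finite (UNIV :: ('n::finite \<Rightarrow> 'a) set)"
  using finite_set_of_finite_funs[of "UNIV :: 'n set" "UNIV :: 'a set"] assms by simp

lemma lincomb_add: "lincomb w (l + l') = lincomb w l + lincomb w l'"
  by (simp add: lincomb_def V.scale_left_distrib sum.distrib)

lemma lincomb_smultv: "lincomb w (smultv c l) = smultv c (lincomb w l)"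
  by (simp add: lincomb_def V.scale_sum_right)

lemma lincomb_unit_vector: "lincomb w (\<lambda>j. if j = i then 1 else 0) = (w i :: 'n::finite \<Rightarrow> 'a::field)"
proof -
  have "lincomb w (\<lambda>j. if j = i then 1 else 0) = (\<Sum>j\<in>UNIV. if j = i then w j else 0)"
    unfolding lincomb_def by (intro sum.cong) auto
  then show ?thesis
    by simp
qed

lemma range_lincomb_eq_span: "range (lincomb w) = V.span (range (w :: 'n::finite \<Rightarrow> 'n \<Rightarrow> 'a::field))"
proof
  have "lincomb w l \<in> V.span (range w)" for l
    unfolding lincomb_def by (intro V.span_sum V.span_scale V.span_base rangeI)
  then show "range (lincomb w) \<subseteq> V.span (range w)"
    by auto
  have "lincomb w 0 = 0"
    by (simp add: lincomb_def)
  then have "V.subspace (range (lincomb w))"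
    unfolding V.subspace_def by (auto simp flip: lincomb_add lincomb_smultv intro: range_eqI)
  moreover have "range w \<subseteq> range (lincomb w)"
    using lincomb_unit_vector[of w, symmetric] by (auto intro: range_eqI)
  ultimately show "V.span (range w) \<subseteq> range (lincomb w)"
    by (rule V.span_minimal[rotated])
qed

lemma is_basis_if_span_eq_UNIV:
  assumes "finite (UNIV :: 'a set)" and "V.span (range w) = UNIV"
  shows "is_basis (w :: 'n::finite \<Rightarrow> 'n \<Rightarrow> 'a::field)"
  using finite_UNIV_surj_inj[OF finite_vectors[OF assms(1)]] assms(2)
  unfolding is_basis_def range_lincomb_eq_span[symmetric] by (simp add: bij_def)

lemma basis_in_spanning_set:
  assumes "finite (UNIV :: 'a set)" and "0 \<in> W" and "V.span W = UNIV"
  obtains w :: "'n::finite \<Rightarrow> 'n \<Rightarrow> 'a::field" where "range w \<subseteq> W" and "is_basis w"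
proof -
  obtain B where "B \<subseteq> W" "V.independent B" "W \<subseteq> V.span B"
    using V.maximal_independent_subset by blast
  define e :: "'n \<Rightarrow> 'n \<Rightarrow> 'a" where "e i = (\<lambda>j. if j = i then 1 else 0)" for i
  have "lincomb e v = v" for v
    by (simp add: lincomb_def e_def fun_eq_iff sum_fun_apply if_distrib cong: if_cong)
  then have "range (lincomb e) = UNIV"
    by (metis surjI)
  then have "V.span (range e) = UNIV"
    by (simp add: range_lincomb_eq_span)
  then have "finite B" and "card B \<le> card (range e)"
    using V.independent_span_bound[of "range e" B] \<open>V.independent B\<close> by auto
  then have "card B \<le> card (UNIV :: 'n set)"
    using card_image_le[OF finite_UNIV, of e] by linarith
  then obtain g :: "_ \<Rightarrow> 'n" where g: "inj_on g B"
    using card_le_inj[OF \<open>finite B\<close> finite_UNIV] by blast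
  define w where "w i = (if i \<in> g ` B then inv_into B g i else 0)" for i
  have "range w \<subseteq> W"
    using \<open>B \<subseteq> W\<close> \<open>0 \<in> W\<close> by (auto simp: w_def inv_into_into)
  moreover have "B \<subseteq> range w"
  proof
    fix b assume "b \<in> B"
    then have "w (g b) = b"
      using g by (simp add: w_def)
    then show "b \<in> range w"
      by (rule range_eqI[OF sym])
  qed
  then have "W \<subseteq> V.span (range w)"
    using \<open>W \<subseteq> V.span B\<close> V.span_mono by blast
  then have "V.span (range w) = UNIV"
    using assms(3) V.span_minimal[of W "V.span (range w)"] by auto
  ultimately show ?thesis
    using that is_basis_if_span_eq_UNIV[OF assms(1)] by blast
qed

section \<open>Frobenius-semilinear maps\<close>

lemma conj_comp:
  assumes "bij b"
  shows "inv b \<circ> (g \<circ> h) \<circ> b = (inv b \<circ> g \<circ> b) \<circ> (inv b \<circ> h \<circ> b)"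
  using assms by (simp add: fun_eq_iff bij_is_surj surj_f_inv_f)

lemma conj_funpow:
  assumes "bij b"
  shows "inv b \<circ> g ^^ t \<circ> b = (inv b \<circ> g \<circ> b) ^^ t"
proof (induction t)
  case 0
  then show ?case
    using assms by (simp add: bij_is_inj)
next
  case (Suc t)
  then show ?case
    by (simp only: funpow.simps(2) conj_comp[OF assms])
qed

lemma subgroup_GammaL_funpow: "subgroup_GammaL H \<Longrightarrow> g \<in> H \<Longrightarrow> g ^^ t \<in> H"
  by (induction t) (auto simp: subgroup_GammaL_def)

lemma phi_basis_funpow_lincomb:
  assumes "is_basis \<beta>"
  shows "(phi_basis p \<beta> ^^ e) (lincomb \<beta> l) = lincomb \<beta> (\<lambda>i. l i ^ p ^ e)"
proof (induction e)
  case (Suc e)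
  have "inv (lincomb \<beta>) (lincomb \<beta> l') = l'" for l'
    using assms by (simp add: is_basis_def bij_is_inj)
  then show ?case
    using Suc by (simp add: phi_basis_def power_mult[symmetric] mult.commute)
qed simp

context galois_field
begin

definition frob_semilinear :: "nat \<Rightarrow> (('n \<Rightarrow> 'a) \<Rightarrow> ('n \<Rightarrow> 'a)) \<Rightarrow> bool" where
  "frob_semilinear e g \<longleftrightarrow>
     (\<forall>u v. g (u + v) = g u + g v) \<and> (\<forall>c v. g (smultv c v) = smultv (c ^ p ^ e) (g v))"

lemma frob_semilinearD:
  assumes "frob_semilinear e g"
  shows "g (u + v) = g u + g v" and "g (smultv c v) = smultv (c ^ p ^ e) (g v)"
  using assms by (auto simp: frob_semilinear_def)

lemma smultv_linear: "frob_semilinear 0 (smultv c)"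
  by (simp add: frob_semilinear_def V.scale_right_distrib mult.commute)

lemma lincomb_linear: "frob_semilinear 0 (lincomb w)"
  by (simp add: frob_semilinear_def lincomb_add lincomb_smultv)

lemma frob_semilinear_zero: "frob_semilinear e g \<Longrightarrow> g 0 = 0"
  using frob_semilinearD(1)[of e g 0 0] by simp

lemma frob_semilinear_sum: "frob_semilinear e g \<Longrightarrow> g (sum F A) = (\<Sum>i\<in>A. g (F i))"
  by (induction A rule: infinite_finite_induct) (auto simp: frob_semilinear_zero frob_semilinearD)

lemma frob_semilinear_comm_smultv: "frob_semilinear e g \<Longrightarrow> g \<circ> smultv c = smultv (c ^ p ^ e) \<circ> g"
  by (simp add: fun_eq_iff frob_semilinearD)

lemma frob_semilinear_comp:
  "frob_semilinear a g \<Longrightarrow> frob_semilinear b h \<Longrightarrow> frob_semilinear (a + b) (g \<circ> h)"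
  by (simp add: frob_semilinear_def power_add power_mult[symmetric] mult.commute)

lemma frob_semilinear_funpow: "frob_semilinear a g \<Longrightarrow> frob_semilinear (a * t) (g ^^ t)"
proof (induction t)
  case 0
  then show ?case by (simp add: frob_semilinear_def)
next
  case (Suc t)
  then show ?case
    using frob_semilinear_comp[of a g "a * t" "g ^^ t"] by (simp only: funpow.simps(2) mult_Suc_right)
qed

lemma frob_semilinear_cong:
  "frob_semilinear a g \<Longrightarrow> a mod f = b mod f \<Longrightarrow> frob_semilinear b g"
  by (simp add: frob_semilinear_def frob_power_cong[of a b])

lemma frob_semilinear_inv:
  assumes "frob_semilinear a g" and "bij g" and "a \<le> f"
  shows "frob_semilinear (f - a) (inv g)"
  unfolding frob_semilinear_def
proof safe
  have g_inv: "g (inv g x) = x" for x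
    using assms(2) by (simp add: bij_is_surj surj_f_inv_f)
  show "inv g (u + v) = inv g u + inv g v" for u v
    using frob_semilinearD(1)[OF assms(1), of "inv g u" "inv g v"]
    by (intro inv_f_eq bij_is_inj[OF assms(2)]) (simp add: g_inv)
  have "(c ^ p ^ (f - a)) ^ p ^ a = c" for c :: 'a
    using assms(3) frob_power_f by (simp flip: power_mult power_add)
  then show "inv g (smultv c v) = smultv (c ^ p ^ (f - a)) (inv g v)" for c v
    using frob_semilinearD(2)[OF assms(1), of "c ^ p ^ (f - a)" "inv g v"]
    by (intro inv_f_eq bij_is_inj[OF assms(2)]) (simp add: g_inv)
qed

lemma GL_iff_frob_semilinear: "g \<in> GL \<longleftrightarrow> bij g \<and> frob_semilinear 0 g"
  by (simp add: GL_def frob_semilinear_def)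

lemma GammaL_frob_semilinear:
  assumes "g \<in> GammaL"
  obtains e where "e < f" and "bij g" and "frob_semilinear e g"
proof -
  obtain \<sigma> where "bij g" "\<forall>u v. g (u + v) = g u + g v" "field_aut \<sigma>"
    "\<forall>c v. g (smultv c v) = smultv (\<sigma> c) (g v)"
    using assms by (auto simp: GammaL_def)
  moreover obtain e where "e < f" "\<And>x. \<sigma> x = x ^ p ^ e"
    using field_aut_eq_frob_power[OF \<open>field_aut \<sigma>\<close>] by blast
  ultimately show ?thesis
    using that by (auto simp: frob_semilinear_def)
qed

lemma GL_comm_smultv:
  fixes c :: 'a
  assumes "b \<in> GL"
  shows "inv b \<circ> smultv c \<circ> b = smultv c"
proof -
  have "smultv c \<circ> b = b \<circ> smultv c"
    using assms frob_semilinear_comm_smultv[of 0 b c] by (simp add: GL_iff_frob_semilinear)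
  then have "inv b \<circ> smultv c \<circ> b = (inv b \<circ> b) \<circ> smultv c"
    by (simp add: comp_assoc)
  then show ?thesis
    using assms by (simp add: GL_iff_frob_semilinear bij_is_inj)
qed

lemma phi_basis_frob_semilinear:
  assumes "is_basis \<beta>"
  shows "frob_semilinear e (phi_basis p \<beta> ^^ e)"
  unfolding frob_semilinear_def
proof safe
  have surj: "\<exists>l. v = lincomb \<beta> l" for v
    using assms by (metis is_basis_def bij_pointE)
  fix u v
  obtain l l' where u: "u = lincomb \<beta> l" and v: "v = lincomb \<beta> l'"
    using surj by blast
  have "(\<lambda>i. (l + l') i ^ p ^ e) = (\<lambda>i. l i ^ p ^ e) + (\<lambda>i. l' i ^ p ^ e)"
    by (simp add: fun_eq_iff frob_add)
  then show "(phi_basis p \<beta> ^^ e) (u + v) = (phi_basis p \<beta> ^^ e) u + (phi_basis p \<beta> ^^ e) v"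
    unfolding u v lincomb_add[symmetric] phi_basis_funpow_lincomb[OF assms] by (simp only: lincomb_add)
  fix c
  have "(\<lambda>i. smultv c l i ^ p ^ e) = smultv (c ^ p ^ e) (\<lambda>i. l i ^ p ^ e)"
    by (simp add: fun_eq_iff power_mult_distrib)
  then show "(phi_basis p \<beta> ^^ e) (smultv c u) = smultv (c ^ p ^ e) ((phi_basis p \<beta> ^^ e) u)"
    unfolding u lincomb_smultv[symmetric] phi_basis_funpow_lincomb[OF assms] by (simp only: lincomb_smultv)
qed

lemma phi_basis_funpow_cong:
  fixes \<beta> :: "'n::finite \<Rightarrow> 'n \<Rightarrow> 'a"
  assumes "is_basis \<beta>" and "a mod f = b mod f"
  shows "phi_basis p \<beta> ^^ a = phi_basis p \<beta> ^^ b"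
proof
  fix v
  obtain l where "v = lincomb \<beta> l"
    using assms(1) by (metis is_basis_def bij_pointE)
  moreover have "(\<lambda>i. l i ^ p ^ a) = (\<lambda>i. l i ^ p ^ b)"
    by (rule ext) (rule frob_power_cong[OF assms(2)])
  ultimately show "(phi_basis p \<beta> ^^ a) v = (phi_basis p \<beta> ^^ b) v"
    by (simp add: phi_basis_funpow_lincomb[OF assms(1)])
qed

definition frob_scalars :: "('n::finite \<Rightarrow> 'n \<Rightarrow> 'a) \<Rightarrow> (('n \<Rightarrow> 'a) \<Rightarrow> ('n \<Rightarrow> 'a)) set" where
  "frob_scalars \<beta> = {(phi_basis p \<beta> ^^ i) \<circ> g | i g. i \<in> {1..f} \<and> g \<in> scalars}"

lemma scalars_eq: "scalars = {smultv c | c. c \<noteq> 0}"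
  by (simp add: scalars_def)

lemma frob_scalars_iff:
  assumes "is_basis \<beta>"
  shows "h \<in> frob_scalars \<beta> \<longleftrightarrow> (\<exists>j c. c \<noteq> 0 \<and> h = (phi_basis p \<beta> ^^ j) \<circ> smultv c)"
proof
  assume "\<exists>j c. c \<noteq> 0 \<and> h = (phi_basis p \<beta> ^^ j) \<circ> smultv c"
  then obtain j c where "c \<noteq> 0" and h: "h = (phi_basis p \<beta> ^^ j) \<circ> smultv c"
    by blast
  define i where "i = (if j mod f = 0 then f else j mod f)"
  have "i \<in> {1..f}" and "i mod f = j mod f"
    using f_pos by (auto simp: i_def)
  then have "h = (phi_basis p \<beta> ^^ i) \<circ> smultv c"
    using h phi_basis_funpow_cong[OF assms, of i j] by simp
  then show "h \<in> frob_scalars \<beta>"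
    unfolding frob_scalars_def scalars_eq using \<open>i \<in> {1..f}\<close> \<open>c \<noteq> 0\<close> by blast
qed (auto simp: frob_scalars_def scalars_eq)

lemma smultv_in_frob_scalars:
  assumes "is_basis \<beta>" and "c \<noteq> 0"
  shows "smultv c \<in> frob_scalars \<beta>"
  unfolding frob_scalars_iff[OF assms(1)] using assms(2) by (intro exI[of _ 0] exI[of _ c]) simp

lemma phi_basis_funpow_in_frob_scalars:
  assumes "is_basis \<beta>"
  shows "phi_basis p \<beta> ^^ k \<in> frob_scalars \<beta>"
proof -
  have "phi_basis p \<beta> ^^ k = phi_basis p \<beta> ^^ k \<circ> smultv 1"
    by (simp add: fun_eq_iff)
  then show ?thesis
    using frob_scalars_iff[OF assms] one_neq_zero by blast
qed

lemma frob_scalars_comp: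
  assumes "is_basis \<beta>" and "g \<in> frob_scalars \<beta>" and "h \<in> frob_scalars \<beta>"
  shows "g \<circ> h \<in> frob_scalars \<beta>"
proof -
  obtain i c j d where "c \<noteq> 0" "d \<noteq> 0" and g: "g = (phi_basis p \<beta> ^^ i) \<circ> smultv c"
    and h: "h = (phi_basis p \<beta> ^^ j) \<circ> smultv d"
    using assms frob_scalars_iff by metis
  obtain c' where c': "c' ^ p ^ j = c"
    using frob_surj by blast
  then have "c' \<noteq> 0"
    using \<open>c \<noteq> 0\<close> p_gt_1 by auto
  have comm: "smultv c \<circ> phi_basis p \<beta> ^^ j = phi_basis p \<beta> ^^ j \<circ> smultv c'"
    using frob_semilinear_comm_smultv[OF phi_basis_frob_semilinear[OF assms(1)]] c' by simp
  have "g \<circ> h = phi_basis p \<beta> ^^ i \<circ> (smultv c \<circ> phi_basis p \<beta> ^^ j) \<circ> smultv d"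
    unfolding g h by (simp add: comp_assoc)
  also have "\<dots> = (phi_basis p \<beta> ^^ (i + j)) \<circ> smultv (c' * d)"
    unfolding comm by (simp add: fun_eq_iff funpow_add)
  finally have "g \<circ> h = (phi_basis p \<beta> ^^ (i + j)) \<circ> smultv (c' * d)" .
  then show ?thesis
    unfolding frob_scalars_iff[OF assms(1)] using \<open>c' \<noteq> 0\<close> \<open>d \<noteq> 0\<close>
    by (intro exI[of _ "i + j"] exI[of _ "c' * d"]) simp
qed

lemma frob_scalars_funpow:
  assumes "is_basis \<beta>" and "g \<in> frob_scalars \<beta>"
  shows "g ^^ t \<in> frob_scalars \<beta>"
proof (induction t)
  case 0
  have "g ^^ 0 = (phi_basis p \<beta> ^^ 0) \<circ> smultv 1"
    by (simp add: fun_eq_iff)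
  then show ?case
    using frob_scalars_iff[OF assms(1)] one_neq_zero by blast
next
  case (Suc t)
  then show ?case
    using frob_scalars_comp[OF assms(1,2)] by (simp only: funpow.simps(2))
qed

section \<open>Galois descent\<close>

lemma frob_semilinear_orbit_sum_fixed:
  assumes "frob_semilinear e h" and "h ^^ m = id"
  shows "h (\<Sum>j<m. (h ^^ j) v) = (\<Sum>j<m. (h ^^ j) v)"
proof -
  have "h (\<Sum>j<m. (h ^^ j) v) = (\<Sum>j<m. (h ^^ Suc j) v)"
    by (simp add: frob_semilinear_sum[OF assms(1)])
  also have "\<dots> = (\<Sum>j<m. (h ^^ j) v)"
    by (rule sum.lessThan_Suc_shift_periodic) (simp add: assms(2))
  finally show ?thesis .
qed

lemma span_frob_semilinear_fixed_points:
  assumes "frob_semilinear k h" and "0 < k" and "k * m = f" and "h ^^ m = id"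
  shows "V.span {v. h v = v} = UNIV"
proof -
  define \<chi> where "\<chi> j a = (a::'a) ^ p ^ (k * j)" for j a
  have "(\<lambda>j. (h ^^ j) v) 0 \<in> V.span {v. h v = v}" for v
  proof (rule V.characters_independent_modulo_span[of \<chi> m "\<lambda>j. (h ^^ j) v"])
    show "\<chi> j (a * b) = \<chi> j a * \<chi> j b" "\<chi> j 1 = 1" for j a b
      by (simp_all add: \<chi>_def power_mult_distrib)
    show "\<exists>b. \<chi> j b \<noteq> \<chi> l b" if "j < m" "l < m" "j \<noteq> l" for j l
    proof (rule ccontr)
      assume "\<not> (\<exists>b. \<chi> j b \<noteq> \<chi> l b)"
      then have "x ^ p ^ (k * j) = x ^ p ^ (k * l)" for x :: 'a
        by (simp add: \<chi>_def)
      moreover have "k * j < f" "k * l < f"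
        using that assms(2) unfolding assms(3)[symmetric] by simp_all
      ultimately have "k * j = k * l"
        using frob_exponent_inj by blast
      then show False
        using that assms(2) by simp
    qed
    \<comment> \<open>The twisted sum is the trace of \<open>smultv a v\<close> under \<open>h\<close>, hence fixed by \<open>h\<close>.\<close>
    show "(\<Sum>j<m. smultv (\<chi> j a) ((h ^^ j) v)) \<in> V.span {v. h v = v}" for a
    proof (rule V.span_base)
      have "(\<Sum>j<m. smultv (\<chi> j a) ((h ^^ j) v)) = (\<Sum>j<m. (h ^^ j) (smultv a v))"
        using frob_semilinearD(2)[OF frob_semilinear_funpow[OF assms(1)]] by (simp add: \<chi>_def)
      then show "(\<Sum>j<m. smultv (\<chi> j a) ((h ^^ j) v)) \<in> {v. h v = v}"
        using frob_semilinear_orbit_sum_fixed[OF assms(1,4)] by simp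
    qed
    show "0 < m"
      using assms(3) f_pos by (cases m) auto
  qed
  then show ?thesis
    by auto
qed

lemma frob_semilinear_fixed_basis:
  assumes "frob_semilinear k h" and "0 < k" and "k * m = f" and "h ^^ m = id"
  obtains w :: "'n::finite \<Rightarrow> 'n \<Rightarrow> 'a" where "\<And>i. h (w i) = w i" and "is_basis w"
proof -
  have "0 \<in> {v. h v = v}"
    using frob_semilinear_zero[OF assms(1)] by simp
  obtain w :: "'n \<Rightarrow> 'n \<Rightarrow> 'a" where "range w \<subseteq> {v. h v = v}" and "is_basis w"
    by (rule basis_in_spanning_set[OF finite_field \<open>0 \<in> _\<close> span_frob_semilinear_fixed_points[OF assms]])
  then show ?thesis
    by (intro that[of w]) auto
qed

lemma conj_fixed_basis_eq_phi_basis: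
  assumes "is_basis \<beta>" and "is_basis w" and "frob_semilinear k h" and "\<And>i. h (w i) = w i"
  shows "lincomb w \<circ> inv (lincomb \<beta>) \<in> GL"
    and "inv (lincomb w \<circ> inv (lincomb \<beta>)) \<circ> h \<circ> (lincomb w \<circ> inv (lincomb \<beta>)) = phi_basis p \<beta> ^^ k"
proof -
  define b where "b = lincomb w \<circ> inv (lincomb \<beta>)"
  have bij_\<beta>: "bij (lincomb \<beta>)" and bij_w: "bij (lincomb w)"
    using assms(1,2) by (simp_all add: is_basis_def)
  then have "frob_semilinear 0 (inv (lincomb \<beta>))"
    using frob_semilinear_cong[OF frob_semilinear_inv[OF lincomb_linear bij_\<beta>], of 0] by simp
  then have "frob_semilinear 0 b"
    using frob_semilinear_comp[OF lincomb_linear] by (simp add: b_def)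
  moreover have "bij b"
    unfolding b_def using bij_\<beta> bij_w by (simp add: bij_comp bij_imp_bij_inv)
  ultimately show b_GL: "lincomb w \<circ> inv (lincomb \<beta>) \<in> GL"
    by (simp add: GL_iff_frob_semilinear b_def)
  have "h (b u) = b ((phi_basis p \<beta> ^^ k) u)" for u
  proof -
    obtain l where u: "u = lincomb \<beta> l"
      using bij_\<beta> by (metis bij_pointE)
    have inv_\<beta>: "inv (lincomb \<beta>) (lincomb \<beta> l') = l'" for l'
      using bij_\<beta> by (simp add: bij_is_inj)
    have "b u = lincomb w l"
      by (simp add: b_def u inv_\<beta>)
    then have "h (b u) = (\<Sum>i\<in>UNIV. h (smultv (l i) (w i)))"
      by (simp add: lincomb_def frob_semilinear_sum[OF assms(3)])
    also have "\<dots> = lincomb w (\<lambda>i. l i ^ p ^ k)"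
      by (simp add: lincomb_def frob_semilinearD(2)[OF assms(3)] assms(4))
    also have "\<dots> = b ((phi_basis p \<beta> ^^ k) u)"
      by (simp add: b_def u inv_\<beta> phi_basis_funpow_lincomb[OF assms(1)])
    finally show ?thesis .
  qed
  then have "inv b \<circ> h \<circ> b = inv b \<circ> b \<circ> phi_basis p \<beta> ^^ k"
    by (intro ext) simp
  then show "inv (lincomb w \<circ> inv (lincomb \<beta>)) \<circ> h \<circ> (lincomb w \<circ> inv (lincomb \<beta>)) = phi_basis p \<beta> ^^ k"
    using \<open>bij b\<close> by (simp add: b_def bij_is_inj)
qed

lemma scaled_frob_semilinear_funpow:
  assumes "frob_semilinear k h"
  shows "(smultv \<nu> \<circ> h) ^^ t = smultv (\<nu> ^ (\<Sum>j<t. (p ^ k) ^ j)) \<circ> h ^^ t"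
proof (induction t)
  case (Suc t)
  define S where "S = (\<Sum>j<t. (p ^ k) ^ j)"
  have "(\<Sum>j<Suc t. (p ^ k) ^ j) = 1 + p ^ k * S"
    by (simp only: sum.lessThan_Suc_shift) (simp add: S_def sum_distrib_left)
  then have scalar: "\<nu> ^ (\<Sum>j<Suc t. (p ^ k) ^ j) = \<nu> * (\<nu> ^ S) ^ p ^ k"
    by (simp add: power_add mult.commute flip: power_mult)
  have "(smultv \<nu> \<circ> h) ^^ Suc t = smultv \<nu> \<circ> h \<circ> smultv (\<nu> ^ S) \<circ> h ^^ t"
    by (simp only: funpow.simps(2) Suc S_def comp_assoc)
  also have "\<dots> = smultv (\<nu> ^ (\<Sum>j<Suc t. (p ^ k) ^ j)) \<circ> h ^^ Suc t"
    by (rule ext) (simp add: frob_semilinearD(2)[OF assms] scalar del: sum.lessThan_Suc)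
  finally show ?case .
qed simp

lemma conj_to_scaled_phi_basis:
  assumes "is_basis \<beta>" and "frob_semilinear k h" and "bij h" and "0 < k" and "k * m = f"
    and "h ^^ m = smultv c" and "c \<noteq> 0"
  obtains b d where "b \<in> GL" and "d \<noteq> 0" and "inv b \<circ> h \<circ> b = smultv d \<circ> phi_basis p \<beta> ^^ k"
proof -
  have "c ^ p ^ k = c"
  proof -
    obtain v where "h v = (\<lambda>_. 1)"
      using assms(3) by (metis bij_pointE)
    moreover have "(\<lambda>_. 1) \<noteq> (0 :: 'n \<Rightarrow> 'a)"
      by (simp add: fun_eq_iff)
    moreover have "h (smultv c v) = smultv c (h v)"
      using funpow_swap1[of h m v] assms(6) by simp
    ultimately show ?thesis
      using frob_semilinearD(2)[OF assms(2), of c v] by auto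
  qed
  then have "inverse c ^ p ^ k = inverse c"
    by (simp add: power_inverse)
  moreover have "inverse c \<noteq> 0"
    using assms(7) by simp
  ultimately obtain \<nu> where "\<nu> \<noteq> 0" and \<nu>: "\<nu> ^ (\<Sum>j<m. (p ^ k) ^ j) = inverse c"
    using frob_norm_surj[OF assms(5)] by metis
  \<comment> \<open>Rescaling by \<open>\<nu>\<close> turns \<open>h\<close> into a semilinear map of order \<open>m\<close>.\<close>
  define h' where "h' = smultv \<nu> \<circ> h"
  have h': "frob_semilinear k h'"
    unfolding h'_def using frob_semilinear_comp[OF smultv_linear assms(2)] by simp
  have "h' ^^ m = id"
    using assms(6,7) \<nu> by (simp add: h'_def scaled_frob_semilinear_funpow[OF assms(2)] fun_eq_iff)
  then obtain w where "\<And>i. h' (w i) = w i" and "is_basis w"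
    using frob_semilinear_fixed_basis[OF h' assms(4,5)] by blast
  with conj_fixed_basis_eq_phi_basis[OF assms(1) _ h']
  obtain b where "b \<in> GL" and conj': "inv b \<circ> h' \<circ> b = phi_basis p \<beta> ^^ k"
    by blast
  have "h = smultv (inverse \<nu>) \<circ> h'"
    using \<open>\<nu> \<noteq> 0\<close> by (simp add: h'_def fun_eq_iff)
  moreover have "bij b"
    using \<open>b \<in> GL\<close> by (simp add: GL_iff_frob_semilinear)
  ultimately have "inv b \<circ> h \<circ> b = (inv b \<circ> smultv (inverse \<nu>) \<circ> b) \<circ> (inv b \<circ> h' \<circ> b)"
    using conj_comp by blast
  also have "\<dots> = smultv (inverse \<nu>) \<circ> phi_basis p \<beta> ^^ k"
    using GL_comm_smultv[OF \<open>b \<in> GL\<close>] conj' by simp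
  finally have "inv b \<circ> h \<circ> b = smultv (inverse \<nu>) \<circ> phi_basis p \<beta> ^^ k" .
  then show ?thesis
    using \<open>\<nu> \<noteq> 0\<close> by (intro that[OF \<open>b \<in> GL\<close>]) simp_all
qed

section \<open>Subgroups of \<open>\<Gamma>L\<^sub>n(q)\<close> meeting \<open>GL\<^sub>n(q)\<close> in scalars\<close>

lemma subgroup_GammaL_member:
  assumes "subgroup_GammaL H" and "h \<in> H"
  obtains e where "e < f" and "bij h" and "frob_semilinear e h"
  using assms GammaL_frob_semilinear by (auto simp: subgroup_GammaL_def)

lemma subgroup_linear_member_scalar:
  assumes "subgroup_GammaL H" and "H \<inter> GL \<subseteq> scalars"
    and "h \<in> H" and "frob_semilinear e h" and "e mod f = 0"
  obtains c where "c \<noteq> 0" and "h = smultv c"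
proof -
  have "frob_semilinear 0 h"
    using frob_semilinear_cong[OF assms(4)] assms(5) by simp
  moreover have "bij h"
    using subgroup_GammaL_member[OF assms(1,3)] by blast
  ultimately have "h \<in> scalars"
    using assms(2,3) GL_iff_frob_semilinear by blast
  then show ?thesis
    using that by (auto simp: scalars_eq)
qed

lemma subgroup_GammaL_cyclic_modulo_scalars:
  assumes "subgroup_GammaL H" and "H \<inter> GL \<subseteq> scalars"
  obtains h\<^sub>0 k m where "h\<^sub>0 \<in> H" and "bij h\<^sub>0" and "frob_semilinear k h\<^sub>0" and "0 < k" and "k * m = f"
    and "\<And>h. h \<in> H \<Longrightarrow> \<exists>t c. c \<noteq> 0 \<and> h = h\<^sub>0 ^^ t \<circ> smultv c"
proof -
  \<comment> \<open>The least positive Frobenius exponent \<open>k\<close> met in \<open>H\<close> divides every other one,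
    so the member \<open>h\<^sub>0\<close> realising it generates \<open>H\<close> modulo scalars.\<close>
  define E where "E = {e. 0 < e \<and> e \<le> f \<and> (\<exists>h\<in>H. frob_semilinear e h)}"
  have "frob_semilinear f id"
    by (simp add: frob_semilinear_def frob_power_f)
  then have "f \<in> E"
    using assms(1) f_pos by (auto simp: E_def subgroup_GammaL_def)
  define k where "k = (LEAST e. e \<in> E)"
  have "k \<in> E"
    unfolding k_def using \<open>f \<in> E\<close> by (rule LeastI)
  then obtain h\<^sub>0 where "h\<^sub>0 \<in> H" and h\<^sub>0: "frob_semilinear k h\<^sub>0" and "0 < k" and "k \<le> f"
    by (auto simp: E_def)
  have minimal: "e = 0" if "g \<in> H" and "frob_semilinear e g" and "e < k" for g e
    using Least_le[of "\<lambda>e. e \<in> E" e] that \<open>k \<le> f\<close> by (fastforce simp: E_def k_def)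
  have pow_H: "h\<^sub>0 ^^ t \<in> H" for t
    by (rule subgroup_GammaL_funpow[OF assms(1) \<open>h\<^sub>0 \<in> H\<close>])
  have bij_pow: "bij (h\<^sub>0 ^^ t)" for t
    using subgroup_GammaL_member[OF assms(1) pow_H] by blast
  have inv_pow_in: "inv (h\<^sub>0 ^^ t) \<in> H" and inv_pow: "frob_semilinear (f - k * t) (inv (h\<^sub>0 ^^ t))"
    if "k * t \<le> f" for t
    using assms(1) pow_H frob_semilinear_inv[OF frob_semilinear_funpow[OF h\<^sub>0] bij_pow that]
    by (simp_all add: subgroup_GammaL_def)
  define m where "m = f div k"
  have "k * m \<le> f" and "f - k * m = f mod k"
    by (simp_all add: m_def minus_mult_div_eq_mod)
  then have "frob_semilinear (f mod k) (inv (h\<^sub>0 ^^ m))"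
    using inv_pow by metis
  then have "f mod k = 0"
    using minimal inv_pow_in[OF \<open>k * m \<le> f\<close>] \<open>0 < k\<close> by simp
  then have "k * m = f"
    using mult_div_mod_eq[of k f] by (simp add: m_def)
  moreover have "\<exists>t c. c \<noteq> 0 \<and> h = h\<^sub>0 ^^ t \<circ> smultv c" if "h \<in> H" for h
  proof -
    obtain e where "e < f" and h: "frob_semilinear e h"
      using subgroup_GammaL_member[OF assms(1) \<open>h \<in> H\<close>] by blast
    define t where "t = e div k"
    have "k * t \<le> e"
      by (simp add: t_def)
    then have "k * t \<le> f"
      using \<open>e < f\<close> by simp
    define g where "g = inv (h\<^sub>0 ^^ t) \<circ> h"
    have "g \<in> H"
      using assms(1) inv_pow_in[OF \<open>k * t \<le> f\<close>] \<open>h \<in> H\<close> by (simp add: g_def subgroup_GammaL_def)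
    have "frob_semilinear (f - k * t + e) g"
      unfolding g_def by (rule frob_semilinear_comp[OF inv_pow[OF \<open>k * t \<le> f\<close>] h])
    moreover have "e mod k = e - k * t"
      by (simp add: t_def minus_mult_div_eq_mod)
    then have "f - k * t + e = f + e mod k"
      using \<open>k * t \<le> e\<close> \<open>e < f\<close> by arith
    ultimately have "frob_semilinear (e mod k) g"
      by (auto elim: frob_semilinear_cong)
    then have "e mod k = 0"
      using minimal \<open>g \<in> H\<close> \<open>0 < k\<close> by simp
    then obtain c where "c \<noteq> 0" and "g = smultv c"
      using subgroup_linear_member_scalar[OF assms \<open>g \<in> H\<close> \<open>frob_semilinear (e mod k) g\<close>] by auto
    moreover have "h\<^sub>0 ^^ t \<circ> inv (h\<^sub>0 ^^ t) = id"
      using bij_pow[of t] by (intro ext) (simp add: bij_is_surj surj_f_inv_f)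
    then have "h = h\<^sub>0 ^^ t \<circ> g"
      by (simp add: g_def flip: comp_assoc)
    ultimately show ?thesis
      by blast
  qed
  moreover have "bij h\<^sub>0"
    using subgroup_GammaL_member[OF assms(1) \<open>h\<^sub>0 \<in> H\<close>] by blast
  ultimately show ?thesis
    using that[OF \<open>h\<^sub>0 \<in> H\<close> _ h\<^sub>0 \<open>0 < k\<close>] by blast
qed

lemma subgroup_GammaL_conj_into_frob_scalars:
  assumes "is_basis \<beta>" and "subgroup_GammaL H" and "H \<inter> GL \<subseteq> scalars"
  shows "\<exists>b\<in>GL. \<forall>h\<in>H. inv b \<circ> h \<circ> b \<in> frob_scalars \<beta>"
proof -
  obtain h\<^sub>0 k m where "h\<^sub>0 \<in> H" "bij h\<^sub>0" and h\<^sub>0: "frob_semilinear k h\<^sub>0" and "0 < k" "k * m = f"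
    and cyclic: "\<And>h. h \<in> H \<Longrightarrow> \<exists>t c. c \<noteq> 0 \<and> h = h\<^sub>0 ^^ t \<circ> smultv c"
    using subgroup_GammaL_cyclic_modulo_scalars[OF assms(2,3)] by metis
  have "(k * m) mod f = 0"
    using \<open>k * m = f\<close> by simp
  then obtain c where "c \<noteq> 0" and "h\<^sub>0 ^^ m = smultv c"
    by (rule subgroup_linear_member_scalar[OF assms(2,3) subgroup_GammaL_funpow[OF assms(2) \<open>h\<^sub>0 \<in> H\<close>]
        frob_semilinear_funpow[OF h\<^sub>0]])
  then obtain b d where "b \<in> GL" and "d \<noteq> 0" and conj: "inv b \<circ> h\<^sub>0 \<circ> b = smultv d \<circ> phi_basis p \<beta> ^^ k"
    using conj_to_scaled_phi_basis[OF assms(1) h\<^sub>0 \<open>bij h\<^sub>0\<close> \<open>0 < k\<close> \<open>k * m = f\<close>] by metis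
  have "bij b"
    using \<open>b \<in> GL\<close> by (simp add: GL_iff_frob_semilinear)
  have conj_H: "inv b \<circ> h \<circ> b \<in> frob_scalars \<beta>" if "h \<in> H" for h
  proof -
    obtain t c where "c \<noteq> 0" and h: "h = h\<^sub>0 ^^ t \<circ> smultv c"
      using cyclic[OF \<open>h \<in> H\<close>] by blast
    then have "inv b \<circ> h \<circ> b = (smultv d \<circ> phi_basis p \<beta> ^^ k) ^^ t \<circ> smultv c"
      using conj_comp[OF \<open>bij b\<close>] conj_funpow[OF \<open>bij b\<close>] GL_comm_smultv[OF \<open>b \<in> GL\<close>] conj by simp
    then show ?thesis
      using assms(1) \<open>c \<noteq> 0\<close> \<open>d \<noteq> 0\<close> by (simp add: frob_scalars_comp frob_scalars_funpow
          smultv_in_frob_scalars phi_basis_funpow_in_frob_scalars)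
  qed
  with \<open>b \<in> GL\<close> show ?thesis
    by blast
qed

end

theorem mainTheorem12:
  fixes H :: "(('n::finite \<Rightarrow> 'a::field) \<Rightarrow> ('n \<Rightarrow> 'a)) set"
    and \<beta> :: "'n \<Rightarrow> 'n \<Rightarrow> 'a"
    and p f :: nat
  assumes "finite (UNIV :: 'a set)"
    and "prime p" and "f \<ge> 1" and "card (UNIV :: 'a set) = p ^ f"
    and "card (UNIV :: 'n set) \<ge> 2"
    and "\<not> (card (UNIV :: 'n set) = 2 \<and> (card (UNIV :: 'a set) = 2 \<or> card (UNIV :: 'a set) = 3))"
    and "is_basis \<beta>"
    and "subgroup_GammaL H"
    and "H \<inter> GL \<subseteq> scalars"
  shows "\<exists>b\<in>GL. \<forall>h\<in>H. \<exists>i\<in>{1..f}. \<exists>g\<in>scalars.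
           inv b \<circ> h \<circ> b = (phi_basis p \<beta> ^^ i) \<circ> g"
proof -
  interpret galois_field p f "TYPE('a)"
    using assms(1-4) by unfold_locales
  show ?thesis
    using subgroup_GammaL_conj_into_frob_scalars[OF assms(7-9)] unfolding frob_scalars_def by blast
qed

end
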